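(* Define $h(n)$ by $$\sum_{n=0}^{\infty}h(n)q^n=\sum_{n=0}^{\infty}\frac{(-q;q)_{2n}q^n}{(q;q)_{2n+1}}=\frac{(-q;q)_\infty}{(q;q)_\infty}(q^4,-q^4,-q^4;q^4)_\infty .$$ Then $h(n)$ equals the number of partitions of $n$ into parts such that no part is $\equiv0\pmod 8$, parts $\equiv2,6\pmod 8$ have one colour, and parts $\equiv1,3,4,5,7\pmod 8$ have two colours.
   Context: $(A;q)_0=1$, $(A;q)_n=\prod_{j=0}^{n-1}(1-Aq^j)$, $(A;q)_\infty=\prod_{j\ge0}(1-Aq^j)$, and $(A_1,\dots,A_r;q)_\infty=\prod_i(A_i;q)_\infty$. A part "having $t$ colours" means that part may occur in $t$ distinguishable copies; the generating function for partitions where parts $\equiv r\pmod s$ have $t$ colours is $1/(q^r;q^s)_\infty^t$. *)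

theory Defs
  imports "HOL-Computational_Algebra.Formal_Power_Series" "HOL-Library.Multiset"
begin

definition qpoch :: "real fps \<Rightarrow> real fps \<Rightarrow> nat \<Rightarrow> real fps" where
  "qpoch A q n = (\<Prod>j<n. 1 - A * q ^ j)"

definition qpoch_inf :: "real fps \<Rightarrow> real fps \<Rightarrow> real fps" where
  "qpoch_inf A q = lim (\<lambda>n. qpoch A q n)"

definition h_term :: "nat \<Rightarrow> real fps" where
  "h_term k = fps_X ^ k * qpoch (- fps_X) fps_X (2 * k) * inverse (qpoch fps_X fps_X (2 * k + 1))"

definition h_gf :: "real fps" where
  "h_gf = lim (\<lambda>N. \<Sum>k<N. h_term k)"

definition h :: "nat \<Rightarrow> real" where
  "h n = fps_nth h_gf n"

definition colours :: "nat \<Rightarrow> nat" where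
  "colours p = (if p mod 8 = 0 then 0 else if p mod 8 \<in> {2, 6} then 1 else 2)"

definition coloured_partitions :: "nat \<Rightarrow> (nat \<times> nat) multiset set" where
  "coloured_partitions n =
     {M. (\<forall>x \<in># M. fst x > 0 \<and> snd x < colours (fst x)) \<and> (\<Sum>x \<in># M. fst x) = n}"

end

theory Submission
  imports Defs
begin

text \<open>
  Splitting \<open>(-q;q)\<^sub>2\<^sub>n\<close> and \<open>(q;q)\<^sub>2\<^sub>n\<^sub>+\<^sub>1\<close> into factors with even and odd exponents
  writes the series as \<open>(1 - q)\<^sup>-\<^sup>1 \<cdot> 2\<phi>1(-q, -q\<^sup>2; q\<^sup>3; q\<^sup>2, q)\<close>. Heine's transformation
  (proved in the usual way: expand \<open>(b;q)\<^sub>n/(bd;q)\<^sub>n\<close> by the q-binomial theorem and interchange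
  the two summations) turns this into a multiple of \<open>2\<phi>1(-q, q; -q\<^sup>2; q\<^sup>2, -q\<^sup>2)\<close>, which is a
  q-binomial series in base \<open>q\<^sup>4\<close>; Euler's identity \<open>(q;q\<^sup>2)\<^sub>\<infinity> (-q;q)\<^sub>\<infinity> = 1\<close> then yields the
  product. That product is the reciprocal of \<open>\<Prod>\<^sub>p (1 - q\<^sup>p)\<^bsup>c(p)\<^esup>\<close>, \<open>c(p)\<close> the number of
  colours of \<open>p\<close>, because \<open>c(p) + [8 | p] = 1 + [p odd] + [p \<equiv> 4 mod 8]\<close>; and the coefficients
  of \<open>\<Prod>\<^sub>t 1/(1 - q\<^bsup>w(t)\<^esup>)\<close> count multisets by weight.

  All infinite sums and products are formal power series whose coefficients stabilise, so every
  identity between them is proved by comparing them modulo \<open>X\<^sup>k\<close> for all \<open>k\<close>.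
\<close>

unbundle fps_syntax

section \<open>Congruences modulo powers of X\<close>

lemma fps_X_power_dvd_iff: "fps_X ^ k dvd (f :: 'a::field fps) \<longleftrightarrow> (\<forall>j<k. f $ j = 0)"
proof (cases "f = 0")
  case False
  then show ?thesis
    by (auto simp: fps_dvd_iff intro: subdegree_geI dest: order.strict_trans2)
qed simp

lemma fps_X_dvd_iff: "fps_X dvd (f :: 'a::field fps) \<longleftrightarrow> f $ 0 = 0"
  using fps_X_power_dvd_iff[of 1 f] by simp

lemma fps_X_power_dvd_power: "(q :: 'a::field fps) $ 0 = 0 \<Longrightarrow> fps_X ^ n dvd q ^ n"
  by (simp add: fps_X_dvd_iff dvd_power_same)

definition fps_cong :: "nat \<Rightarrow> 'a::field fps \<Rightarrow> 'a fps \<Rightarrow> bool" where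
  "fps_cong k f g \<longleftrightarrow> fps_X ^ k dvd f - g"

lemma fps_cong_iff_nth: "fps_cong k f g \<longleftrightarrow> (\<forall>j<k. f $ j = g $ j)"
  by (simp add: fps_cong_def fps_X_power_dvd_iff)

lemma fps_cong_refl [simp]: "fps_cong k f f"
  by (simp add: fps_cong_def)

lemma fps_cong_sym: "fps_cong k f g \<Longrightarrow> fps_cong k g f"
  by (simp add: fps_cong_iff_nth)

lemma fps_cong_trans [trans]: "fps_cong k f g \<Longrightarrow> fps_cong k g r \<Longrightarrow> fps_cong k f r"
  by (simp add: fps_cong_iff_nth)

lemma fps_cong_add: "fps_cong k f g \<Longrightarrow> fps_cong k f' g' \<Longrightarrow> fps_cong k (f + f') (g + g')"
  by (simp add: fps_cong_iff_nth)

lemma fps_cong_diff: "fps_cong k f g \<Longrightarrow> fps_cong k f' g' \<Longrightarrow> fps_cong k (f - f') (g - g')"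
  by (simp add: fps_cong_iff_nth)

lemma fps_cong_mult:
  assumes "fps_cong k f g" "fps_cong k f' g'"
  shows "fps_cong k (f * f') (g * g')"
proof -
  have "f * f' - g * g' = (f - g) * f' + g * (f' - g')"
    by (simp add: algebra_simps)
  then show ?thesis
    using assms unfolding fps_cong_def by (metis dvd_add dvd_mult dvd_mult2)
qed

lemma fps_cong_sum:
  "(\<And>i. i \<in> I \<Longrightarrow> fps_cong k (f i) (g i)) \<Longrightarrow> fps_cong k (\<Sum>i\<in>I. f i) (\<Sum>i\<in>I. g i)"
  by (induction I rule: infinite_finite_induct) (auto intro: fps_cong_add)

lemma fps_cong_prod:
  "(\<And>i. i \<in> I \<Longrightarrow> fps_cong k (f i) (g i)) \<Longrightarrow> fps_cong k (\<Prod>i\<in>I. f i) (\<Prod>i\<in>I. g i)"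
  by (induction I rule: infinite_finite_induct) (auto intro: fps_cong_mult)

lemma fps_cong_inverse:
  assumes "fps_cong k f g" "f $ 0 \<noteq> 0" "g $ 0 \<noteq> 0"
  shows "fps_cong k (inverse f) (inverse g)"
proof -
  have "inverse f - inverse g = inverse f * inverse g * (g - f)"
    using assms(2,3) by (simp add: algebra_simps inverse_mult_eq_1')
  then show ?thesis
    using assms(1) fps_cong_sym unfolding fps_cong_def by (metis dvd_mult)
qed

lemma fps_eq_if_cong: "(\<And>k. fps_cong k f g) \<Longrightarrow> f = g"
  by (metis fps_cong_iff_nth fps_ext lessI)

section \<open>Limits with stabilising coefficients\<close>

lemma fps_stable_seq_tendsto:
  fixes s :: "nat \<Rightarrow> 'a::field fps"
  assumes stable: "\<And>K n. K \<le> n \<Longrightarrow> fps_cong K (s n) (s K)"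
  shows "s \<longlonglongrightarrow> lim s" and "K \<le> n \<Longrightarrow> fps_cong K (lim s) (s n)"
proof -
  define L where "L = Abs_fps (\<lambda>k. s (Suc k) $ k)"
  have nth_s: "s n $ k = L $ k" if "k < n" for n k
    using stable[of "Suc k" n] that by (simp add: fps_cong_iff_nth L_def)
  have "s \<longlonglongrightarrow> L"
  proof (rule tendsto_fpsI)
    fix k
    show "eventually (\<lambda>n. s n $ k = L $ k) sequentially"
      by (rule eventually_sequentiallyI[of "Suc k"]) (simp add: nth_s)
  qed
  then have "lim s = L"
    by (rule limI)
  with \<open>s \<longlonglongrightarrow> L\<close> show "s \<longlonglongrightarrow> lim s"
    by simp
  show "fps_cong K (lim s) (s n)" if "K \<le> n"
    using nth_s that by (simp add: fps_cong_iff_nth \<open>lim s = L\<close>)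
qed

lemma fps_cong_partial_sums:
  fixes f :: "nat \<Rightarrow> 'a::field fps"
  assumes "\<And>n. fps_X ^ n dvd f n" "K \<le> N"
  shows "fps_cong K (\<Sum>n<N. f n) (\<Sum>n<K. f n)"
proof -
  have "fps_X ^ K dvd f n" if "K \<le> n" for n
    using assms(1)[of n] that by (meson dvd_trans le_imp_power_dvd)
  then have "fps_X ^ K dvd (\<Sum>n\<in>{K..<N}. f n)"
    by (intro dvd_sum) auto
  moreover have "(\<Sum>n<N. f n) = (\<Sum>n<K. f n) + (\<Sum>n\<in>{K..<N}. f n)"
    using assms(2) by (simp add: lessThan_atLeast0 sum.atLeastLessThan_concat)
  ultimately show ?thesis
    by (simp add: fps_cong_def)
qed

lemma
  fixes f :: "nat \<Rightarrow> 'a::field fps"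
  assumes "\<And>n. fps_X ^ n dvd f n"
  shows sums_fps_if_X_power_dvd: "f sums (\<Sum>n. f n)"
    and fps_cong_suminf: "K \<le> N \<Longrightarrow> fps_cong K (\<Sum>n. f n) (\<Sum>n<N. f n)"
proof -
  have suminf_eq: "(\<Sum>n. f n) = lim (\<lambda>N. \<Sum>n<N. f n)"
    by (simp add: suminf_def sums_def lim_def)
  have "K \<le> N \<Longrightarrow> fps_cong K (\<Sum>n<N. f n) (\<Sum>n<K. f n)" for K N
    by (rule fps_cong_partial_sums[OF assms])
  note stable = fps_stable_seq_tendsto[of "\<lambda>N. \<Sum>n<N. f n", OF this]
  show "f sums (\<Sum>n. f n)"
    unfolding sums_def suminf_eq using stable(1) .
  show "fps_cong K (\<Sum>n. f n) (\<Sum>n<N. f n)" if "K \<le> N"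
    unfolding suminf_eq using stable(2) that by blast
qed

lemma fps_X_power_dvd_suminf:
  fixes f :: "nat \<Rightarrow> 'a::field fps"
  assumes "\<And>n. fps_X ^ n dvd f n" "\<And>n. fps_X ^ k dvd f n"
  shows "fps_X ^ k dvd (\<Sum>n. f n)"
proof -
  have "fps_cong k (\<Sum>n. f n) (\<Sum>n<k. f n)"
    using fps_cong_suminf[OF assms(1)] by simp
  moreover have "fps_X ^ k dvd (\<Sum>n<k. f n)"
    using assms(2) by (simp add: dvd_sum)
  ultimately have "fps_X ^ k dvd ((\<Sum>n. f n) - (\<Sum>n<k. f n)) + (\<Sum>n<k. f n)"
    unfolding fps_cong_def by (rule dvd_add)
  then show ?thesis
    by simp
qed

lemma suminf_fps_mult_left:
  fixes f :: "nat \<Rightarrow> 'a::field fps"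
  assumes "\<And>n. fps_X ^ n dvd f n"
  shows "c * (\<Sum>n. f n) = (\<Sum>n. c * f n)"
proof (rule fps_eq_if_cong)
  fix K
  have "fps_cong K (c * (\<Sum>n. f n)) (c * (\<Sum>n<K. f n))"
    by (intro fps_cong_mult fps_cong_refl fps_cong_suminf assms) simp
  also have "c * (\<Sum>n<K. f n) = (\<Sum>n<K. c * f n)"
    by (simp add: sum_distrib_left)
  also have "fps_cong K \<dots> (\<Sum>n. c * f n)"
    by (rule fps_cong_sym, rule fps_cong_suminf) (simp_all add: assms)
  finally show "fps_cong K (c * (\<Sum>n. f n)) (\<Sum>n. c * f n)" .
qed

lemma suminf_fps_swap:
  fixes w :: "nat \<Rightarrow> nat \<Rightarrow> 'a::field fps"
  assumes dvd: "\<And>n m. fps_X ^ (n + m) dvd w n m"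
  shows "(\<Sum>n. \<Sum>m. w n m) = (\<Sum>m. \<Sum>n. w n m)"
proof (rule fps_eq_if_cong)
  fix K
  have dvd_n: "fps_X ^ n dvd w n m" and dvd_m: "fps_X ^ m dvd w n m" for n m
    using dvd[of n m] by (meson dvd_trans le_add1 le_add2 le_imp_power_dvd)+
  have rows: "fps_X ^ n dvd (\<Sum>m. w n m)" and cols: "fps_X ^ m dvd (\<Sum>n. w n m)" for n m
    by (intro fps_X_power_dvd_suminf dvd_n dvd_m)+
  have "fps_cong K (\<Sum>n. \<Sum>m. w n m) (\<Sum>n<K. \<Sum>m. w n m)"
    by (intro fps_cong_suminf rows) simp
  also have "fps_cong K \<dots> (\<Sum>n<K. \<Sum>m<K. w n m)"
    by (intro fps_cong_sum fps_cong_suminf dvd_m) simp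
  also have "(\<Sum>n<K. \<Sum>m<K. w n m) = (\<Sum>m<K. \<Sum>n<K. w n m)"
    by (rule sum.swap)
  also have "fps_cong K \<dots> (\<Sum>m<K. \<Sum>n. w n m)"
    by (rule fps_cong_sum, rule fps_cong_sym, rule fps_cong_suminf[OF dvd_n]) simp
  also have "fps_cong K \<dots> (\<Sum>m. \<Sum>n. w n m)"
    by (rule fps_cong_sym, rule fps_cong_suminf[OF cols]) simp
  finally show "fps_cong K (\<Sum>n. \<Sum>m. w n m) (\<Sum>m. \<Sum>n. w n m)" .
qed

section \<open>q-Pochhammer symbols\<close>

lemma qpoch_0 [simp]: "qpoch A q 0 = 1"
  by (simp add: qpoch_def)

lemma qpoch_Suc: "qpoch A q (Suc n) = qpoch A q n * (1 - A * q ^ n)"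
  by (simp add: qpoch_def)

lemma qpoch_add: "qpoch A q (n + m) = qpoch A q n * qpoch (A * q ^ n) q m"
  by (induction m) (simp_all add: qpoch_Suc power_add mult.assoc)

lemma fps_cong_qpoch_1:
  assumes "fps_X ^ k dvd A"
  shows "fps_cong k (qpoch A q n) 1"
proof -
  have "fps_cong k (\<Prod>j<n. 1 - A * q ^ j) (\<Prod>j<n. 1)"
    by (rule fps_cong_prod) (simp add: fps_cong_def assms)
  then show ?thesis
    by (simp add: qpoch_def)
qed

lemma qpoch_nth_0 [simp]: "A $ 0 = 0 \<Longrightarrow> qpoch A q n $ 0 = 1"
  using fps_cong_qpoch_1[of 1 A q n] by (simp add: fps_cong_iff_nth fps_X_dvd_iff)

lemma fps_cong_qpoch_qpoch:
  assumes "q $ 0 = 0" "K \<le> n"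
  shows "fps_cong K (qpoch A q n) (qpoch A q K)"
proof -
  obtain m where n: "n = K + m"
    using assms(2) le_Suc_ex by blast
  have "fps_cong K (qpoch A q K * qpoch (A * q ^ K) q m) (qpoch A q K * 1)"
    using fps_X_power_dvd_power[OF assms(1)]
    by (intro fps_cong_mult fps_cong_refl fps_cong_qpoch_1) simp
  then show ?thesis
    by (simp add: n qpoch_add)
qed

lemma fps_cong_qpoch_inf:
  assumes "q $ 0 = 0" "K \<le> n"
  shows "fps_cong K (qpoch_inf A q) (qpoch A q n)"
  unfolding qpoch_inf_def
  by (rule fps_stable_seq_tendsto(2)) (use fps_cong_qpoch_qpoch[OF assms(1)] assms(2) in auto)

lemma qpoch_inf_nth_0 [simp]:
  assumes "q $ 0 = 0" "A $ 0 = 0"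
  shows "qpoch_inf A q $ 0 = 1"
  using fps_cong_qpoch_inf[OF assms(1), of 1 1 A] assms(2) by (simp add: fps_cong_iff_nth)

lemma fps_cong_qpoch_inf_1:
  assumes "q $ 0 = 0" "fps_X ^ k dvd A"
  shows "fps_cong k (qpoch_inf A q) 1"
  using fps_cong_qpoch_inf[OF assms(1) order.refl] fps_cong_qpoch_1[OF assms(2)]
  by (rule fps_cong_trans)

lemma qpoch_inf_eq_qpoch_mult:
  assumes "q $ 0 = 0"
  shows "qpoch_inf A q = qpoch A q n * qpoch_inf (A * q ^ n) q"
proof (rule fps_eq_if_cong)
  fix K
  have "fps_cong K (qpoch_inf A q) (qpoch A q (n + K))"
    by (rule fps_cong_qpoch_inf[OF assms]) simp
  also have "qpoch A q (n + K) = qpoch A q n * qpoch (A * q ^ n) q K"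
    by (rule qpoch_add)
  also have "fps_cong K \<dots> (qpoch A q n * qpoch_inf (A * q ^ n) q)"
    by (intro fps_cong_mult fps_cong_refl, rule fps_cong_sym, rule fps_cong_qpoch_inf[OF assms]) simp
  finally show "fps_cong K (qpoch_inf A q) (qpoch A q n * qpoch_inf (A * q ^ n) q)" .
qed

lemma qpoch_inf_eq_1_minus_mult:
  assumes "q $ 0 = 0"
  shows "qpoch_inf A q = (1 - A) * qpoch_inf (A * q) q"
  using qpoch_inf_eq_qpoch_mult[OF assms, of A 1] by (simp add: qpoch_Suc)

lemma qpoch_even_odd: "qpoch A q (2 * n) = qpoch A (q ^ 2) n * qpoch (A * q) (q ^ 2) n"
  by (induction n) (simp_all add: qpoch_Suc mult_ac flip: power_mult)

lemma qpoch_mult_uminus: "qpoch A q n * qpoch (- A) q n = qpoch (A ^ 2) (q ^ 2) n"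
  unfolding qpoch_def prod.distrib[symmetric]
  by (rule prod.cong) (simp_all add: algebra_simps power2_eq_square flip: power_mult)

lemma qpoch_inf_even_odd:
  assumes "q $ 0 = 0"
  shows "qpoch_inf A q = qpoch_inf A (q ^ 2) * qpoch_inf (A * q) (q ^ 2)"
proof (rule fps_eq_if_cong)
  fix K
  have q2: "(q ^ 2) $ 0 = 0"
    using assms by simp
  have "fps_cong K (qpoch_inf A q) (qpoch A q (2 * K))"
    by (rule fps_cong_qpoch_inf[OF assms]) simp
  also have "qpoch A q (2 * K) = qpoch A (q ^ 2) K * qpoch (A * q) (q ^ 2) K"
    by (rule qpoch_even_odd)
  also have "fps_cong K \<dots> (qpoch_inf A (q ^ 2) * qpoch_inf (A * q) (q ^ 2))"
    by (intro fps_cong_mult; rule fps_cong_sym, rule fps_cong_qpoch_inf[OF q2]) simp_all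
  finally show "fps_cong K (qpoch_inf A q) (qpoch_inf A (q ^ 2) * qpoch_inf (A * q) (q ^ 2))" .
qed

lemma qpoch_inf_mult_uminus:
  assumes "q $ 0 = 0"
  shows "qpoch_inf A q * qpoch_inf (- A) q = qpoch_inf (A ^ 2) (q ^ 2)"
proof (rule fps_eq_if_cong)
  fix K
  have q2: "(q ^ 2) $ 0 = 0"
    using assms by simp
  have "fps_cong K (qpoch_inf A q * qpoch_inf (- A) q) (qpoch A q K * qpoch (- A) q K)"
    by (intro fps_cong_mult fps_cong_qpoch_inf[OF assms]) simp_all
  also have "qpoch A q K * qpoch (- A) q K = qpoch (A ^ 2) (q ^ 2) K"
    by (rule qpoch_mult_uminus)
  also have "fps_cong K \<dots> (qpoch_inf (A ^ 2) (q ^ 2))"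
    by (rule fps_cong_sym, rule fps_cong_qpoch_inf[OF q2]) simp
  finally show "fps_cong K (qpoch_inf A q * qpoch_inf (- A) q) (qpoch_inf (A ^ 2) (q ^ 2))" .
qed

lemma qpoch_inf_euler:
  assumes "q $ 0 = 0"
  shows "qpoch_inf q (q ^ 2) * qpoch_inf (- q) q = 1"
proof -
  define P where "P = qpoch_inf (q ^ 2) (q ^ 2)"
  have "qpoch_inf q q = qpoch_inf q (q ^ 2) * P"
    using qpoch_inf_even_odd[OF assms, of q] by (simp add: P_def power2_eq_square)
  moreover have "qpoch_inf q q * qpoch_inf (- q) q = P"
    unfolding P_def by (rule qpoch_inf_mult_uminus[OF assms])
  ultimately have "P * (qpoch_inf q (q ^ 2) * qpoch_inf (- q) q) = P * 1"
    by (simp add: mult_ac)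
  moreover have "(q ^ 2) $ 0 = 0"
    using assms by simp
  then have "P \<noteq> 0"
    using qpoch_inf_nth_0 by (metis P_def one_neq_zero fps_zero_nth)
  ultimately show ?thesis
    by simp
qed

section \<open>The q-binomial theorem and Heine's transformation\<close>

definition qbinomial_term :: "real fps \<Rightarrow> real fps \<Rightarrow> real fps \<Rightarrow> nat \<Rightarrow> real fps" where
  "qbinomial_term a q z m = qpoch a q m * z ^ m * inverse (qpoch q q m)"

lemma fps_X_power_dvd_qbinomial_term: "z $ 0 = 0 \<Longrightarrow> fps_X ^ m dvd qbinomial_term a q z m"
  unfolding qbinomial_term_def by (simp add: fps_X_power_dvd_power)

lemma qbinomial_term_0 [simp]: "qbinomial_term a q z 0 = 1"
  by (simp add: qbinomial_term_def)

lemma qbinomial_term_Suc_diff: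
  assumes "q $ 0 = 0"
  shows "qbinomial_term a q z (Suc m) - qbinomial_term a q (z * q) (Suc m)
       = z * (qbinomial_term a q z m - a * qbinomial_term a q (z * q) m)"
proof -
  \<comment> \<open>over fresh variables: \<open>algebra\<close> does not treat powers with variable exponent as atoms\<close>
  have ring_identity: "(1 - q * Q) * u = 1 \<Longrightarrow>
      P * (1 - a * Q) * (z * Z) * (I * u) - P * (1 - a * Q) * (z * q * (Z * Q)) * (I * u)
      = z * (P * Z * I - a * (P * (Z * Q) * I))" for P Q Z I u :: "real fps"
    by algebra
  have "(1 - q * q ^ m) * inverse (1 - q * q ^ m) = 1"
    using assms by (intro inverse_mult_eq_1') simp
  then show ?thesis
    unfolding qbinomial_term_def qpoch_Suc fps_inverse_mult power_Suc power_mult_distrib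
    by (rule ring_identity)
qed

lemma qbinomial_functional_equation:
  assumes q: "q $ 0 = 0" and z: "z $ 0 = 0"
  shows "(1 - z) * (\<Sum>m. qbinomial_term a q z m) = (1 - a * z) * (\<Sum>m. qbinomial_term a q (z * q) m)"
proof -
  let ?S = "\<lambda>w. \<Sum>m. qbinomial_term a q w m" and ?P = "\<lambda>w N. \<Sum>m<N. qbinomial_term a q w m"
  have dvd: "fps_X ^ m dvd qbinomial_term a q z m" "fps_X ^ m dvd qbinomial_term a q (z * q) m" for m
    using z by (simp_all add: fps_X_power_dvd_qbinomial_term)
  have partial: "?P z (Suc N) - ?P (z * q) (Suc N) = z * (?P z N - a * ?P (z * q) N)" for N
    by (simp add: sum.lessThan_Suc_shift sum_subtractf[symmetric] sum_distrib_left
        right_diff_distrib qbinomial_term_Suc_diff[OF q] del: sum.lessThan_Suc)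
  have "?S z - ?S (z * q) = z * (?S z - a * ?S (z * q))"
  proof (rule fps_eq_if_cong)
    fix K
    have "fps_cong K (?S z - ?S (z * q)) (?P z (Suc K) - ?P (z * q) (Suc K))"
      by (intro fps_cong_diff fps_cong_suminf dvd) simp_all
    also have "?P z (Suc K) - ?P (z * q) (Suc K) = z * (?P z K - a * ?P (z * q) K)"
      by (rule partial)
    also have "fps_cong K \<dots> (z * (?S z - a * ?S (z * q)))"
      by (intro fps_cong_mult fps_cong_diff fps_cong_refl;
          rule fps_cong_sym, rule fps_cong_suminf[OF dvd(1)] fps_cong_suminf[OF dvd(2)], simp)
    finally show "fps_cong K (?S z - ?S (z * q)) (z * (?S z - a * ?S (z * q)))" .
  qed
  then show ?thesis
    by (simp add: algebra_simps)
qed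

lemma fps_cong_qbinomial_1:
  assumes z: "z $ 0 = 0" and "fps_X ^ k dvd z"
  shows "fps_cong k (\<Sum>m. qbinomial_term a q z m) 1"
proof -
  have "fps_X ^ k dvd qbinomial_term a q z m" if "m > 0" for m
  proof -
    have "fps_X ^ k dvd z ^ m"
      using assms(2) that by (cases m) simp_all
    then show ?thesis
      by (simp add: qbinomial_term_def)
  qed
  then have "fps_cong k (qbinomial_term a q z m) (if m = 0 then 1 else 0)" for m
    by (simp add: fps_cong_def)
  then have "fps_cong k (\<Sum>m<k. qbinomial_term a q z m) (\<Sum>m<k. if m = 0 then 1 else 0)"
    by (intro fps_cong_sum)
  also have "(\<Sum>m<k. if m = 0 then 1 else 0) = (if k = 0 then 0 else 1 :: real fps)"
    by simp
  finally have "fps_cong k (\<Sum>m<k. qbinomial_term a q z m) 1"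
    by (cases "k = 0") (simp_all add: fps_cong_def)
  with fps_cong_suminf[OF fps_X_power_dvd_qbinomial_term[OF z, where a = a and q = q], of k k]
  show ?thesis
    by (blast intro: fps_cong_trans)
qed

theorem q_binomial:
  assumes q: "q $ 0 = 0" and z: "z $ 0 = 0"
  shows "(\<Sum>m. qbinomial_term a q z m) = qpoch_inf (a * z) q * inverse (qpoch_inf z q)"
proof -
  define \<Phi> where "\<Phi> w = (\<Sum>m. qbinomial_term a q w m) * qpoch_inf w q - qpoch_inf (a * w) q" for w
  have rec: "\<Phi> w = (1 - a * w) * \<Phi> (w * q)" if "w $ 0 = 0" for w
    using qpoch_inf_eq_1_minus_mult[OF q, of w]
      qpoch_inf_eq_1_minus_mult[OF q, of "a * w", unfolded mult.assoc]
      qbinomial_functional_equation[OF q that, of a]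
    unfolding \<Phi>_def by algebra
  have small: "fps_X ^ k dvd \<Phi> w" if "w $ 0 = 0" "fps_X ^ k dvd w" for w k
  proof -
    have "fps_cong k ((\<Sum>m. qbinomial_term a q w m) * qpoch_inf w q) (1 * 1)"
      using that by (intro fps_cong_mult fps_cong_qbinomial_1 fps_cong_qpoch_inf_1 q)
    moreover have "fps_cong k (qpoch_inf (a * w) q) 1"
      using that by (intro fps_cong_qpoch_inf_1 q dvd_mult)
    ultimately have "fps_cong k (\<Phi> w) (1 * 1 - 1)"
      unfolding \<Phi>_def by (rule fps_cong_diff)
    then show ?thesis
      by (simp add: fps_cong_def)
  qed
  have iterate: "\<Phi> w = qpoch (a * w) q m * \<Phi> (w * q ^ m)" if "w $ 0 = 0" for w m
    using that
  proof (induction m arbitrary: w)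
    case (Suc m)
    have "(w * q) $ 0 = 0"
      using Suc.prems by simp
    then show ?case
      using rec[OF Suc.prems] Suc.IH[of "w * q"] qpoch_add[of "a * w" q 1 m]
      by (simp add: qpoch_Suc mult_ac)
  qed simp
  have "\<Phi> z = 0"
  proof (rule fps_eq_if_cong)
    fix k
    have "fps_X ^ k dvd \<Phi> (z * q ^ k)"
      using z q by (intro small) (simp_all add: fps_X_power_dvd_power)
    then show "fps_cong k (\<Phi> z) 0"
      using iterate[OF z, of k] by (simp add: fps_cong_def)
  qed
  moreover have "qpoch_inf z q * inverse (qpoch_inf z q) = 1"
    using q z by (simp add: inverse_mult_eq_1')
  ultimately show ?thesis
    unfolding \<Phi>_def by algebra
qed

lemma qpoch_inf_shift_quotient:
  assumes q: "q $ 0 = 0" and "A $ 0 = 0" "B $ 0 = 0"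
  shows "qpoch_inf (A * q ^ n) q * inverse (qpoch_inf (B * q ^ n) q)
       = qpoch_inf A q * inverse (qpoch_inf B q) * qpoch B q n * inverse (qpoch A q n)"
proof -
  define A' B' where "A' = qpoch_inf (A * q ^ n) q" and "B' = qpoch_inf (B * q ^ n) q"
  have "qpoch A q n * inverse (qpoch A q n) = 1" "qpoch B q n * inverse (qpoch B q n) = 1"
    using assms by (simp_all add: inverse_mult_eq_1')
  then show ?thesis
    unfolding qpoch_inf_eq_qpoch_mult[OF q, of A n] qpoch_inf_eq_qpoch_mult[OF q, of B n]
      fps_inverse_mult A'_def[symmetric] B'_def[symmetric]
    by algebra
qed

lemma qpoch_quotient_expansion:
  assumes q: "q $ 0 = 0" and b: "b $ 0 = 0"
  shows "qpoch b q n * inverse (qpoch (b * d) q n)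
       = qpoch_inf b q * inverse (qpoch_inf (b * d) q) * (\<Sum>m. qbinomial_term d q (b * q ^ n) m)"
proof -
  have "(\<Sum>m. qbinomial_term d q (b * q ^ n) m)
      = qpoch_inf (b * d * q ^ n) q * inverse (qpoch_inf (b * q ^ n) q)"
    using q_binomial[OF q, of "b * q ^ n" d] b by (simp add: mult_ac)
  also have "\<dots> = qpoch_inf (b * d) q * inverse (qpoch_inf b q) * qpoch b q n * inverse (qpoch (b * d) q n)"
    using q b by (intro qpoch_inf_shift_quotient) simp_all
  finally have series: "(\<Sum>m. qbinomial_term d q (b * q ^ n) m) = \<dots>" .
  have "qpoch_inf b q * inverse (qpoch_inf b q) = 1" "qpoch_inf (b * d) q * inverse (qpoch_inf (b * d) q) = 1"
    using q b by (simp_all add: inverse_mult_eq_1')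
  then show ?thesis
    unfolding series by algebra
qed

definition phi21 :: "real fps \<Rightarrow> real fps \<Rightarrow> real fps \<Rightarrow> real fps \<Rightarrow> real fps \<Rightarrow> real fps" where
  "phi21 a b c q z = (\<Sum>n. qpoch a q n * qpoch b q n * z ^ n * inverse (qpoch q q n * qpoch c q n))"

theorem heine_transformation:
  assumes q: "q $ 0 = 0" and z: "z $ 0 = 0" and b: "b $ 0 = 0"
  shows "phi21 a b (b * d) q z
       = qpoch_inf b q * qpoch_inf (a * z) q * inverse (qpoch_inf (b * d) q * qpoch_inf z q)
         * phi21 d z (a * z) q b"
proof -
  define C where "C = qpoch_inf b q * inverse (qpoch_inf (b * d) q)"
  define E where "E = qpoch_inf (a * z) q * inverse (qpoch_inf z q)"
  define w where "w n m = qbinomial_term a q z n * qbinomial_term d q (b * q ^ n) m" for n m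
  have w_swap: "w n m = qbinomial_term d q b m * qbinomial_term a q (z * q ^ m) n" for n m
    by (simp add: w_def qbinomial_term_def power_mult_distrib mult_ac flip: power_mult)
  have dvd_w: "fps_X ^ (n + m) dvd w n m" for n m
    unfolding w_def power_add using q z b
    by (intro mult_dvd_mono fps_X_power_dvd_qbinomial_term) simp_all
  then have dvd_row: "fps_X ^ n dvd (\<Sum>m. w n m)" for n
    by (intro fps_X_power_dvd_suminf) (meson dvd_trans le_add1 le_add2 le_imp_power_dvd)+
  have row: "qpoch a q n * qpoch b q n * z ^ n * inverse (qpoch q q n * qpoch (b * d) q n)
      = C * (\<Sum>m. w n m)" for n
  proof -
    have "fps_X ^ m dvd qbinomial_term d q (b * q ^ n) m" for m
      using b by (intro fps_X_power_dvd_qbinomial_term) simp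
    then have "qbinomial_term a q z n * (\<Sum>m. qbinomial_term d q (b * q ^ n) m) = (\<Sum>m. w n m)"
      unfolding w_def by (rule suminf_fps_mult_left)
    then show ?thesis
      using qpoch_quotient_expansion[OF q b, of n d]
      by (simp add: C_def qbinomial_term_def fps_inverse_mult mult_ac)
  qed
  have column: "(\<Sum>n. w n m) = E * (qpoch d q m * qpoch z q m * b ^ m
      * inverse (qpoch q q m * qpoch (a * z) q m))" for m
  proof -
    have "fps_X ^ n dvd qbinomial_term a q (z * q ^ m) n" for n
      using z by (intro fps_X_power_dvd_qbinomial_term) simp
    then have "(\<Sum>n. w n m) = qbinomial_term d q b m * (\<Sum>n. qbinomial_term a q (z * q ^ m) n)"
      unfolding w_swap by (rule suminf_fps_mult_left[symmetric])
    also have "(\<Sum>n. qbinomial_term a q (z * q ^ m) n)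
        = qpoch_inf (a * z * q ^ m) q * inverse (qpoch_inf (z * q ^ m) q)"
      using q_binomial[OF q, of "z * q ^ m" a] z by (simp add: mult_ac)
    also have "\<dots> = E * qpoch z q m * inverse (qpoch (a * z) q m)"
      unfolding E_def using q z by (intro qpoch_inf_shift_quotient) simp_all
    finally show ?thesis
      by (simp add: qbinomial_term_def fps_inverse_mult mult_ac)
  qed
  have "phi21 a b (b * d) q z = (\<Sum>n. C * (\<Sum>m. w n m))"
    unfolding phi21_def row ..
  also have "\<dots> = C * (\<Sum>n. \<Sum>m. w n m)"
    by (rule suminf_fps_mult_left[OF dvd_row, symmetric])
  also have "(\<Sum>n. \<Sum>m. w n m) = (\<Sum>m. \<Sum>n. w n m)"
    by (rule suminf_fps_swap[OF dvd_w])
  also have "\<dots> = E * phi21 d z (a * z) q b"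
    unfolding column phi21_def using b
    by (intro suminf_fps_mult_left[symmetric]) (simp add: fps_X_power_dvd_power)
  finally show ?thesis
    by (simp add: C_def E_def fps_inverse_mult mult_ac)
qed

section \<open>The generating function of h\<close>

lemma qpoch_odd: "qpoch A q (2 * n + 1) = qpoch A (q ^ 2) (n + 1) * qpoch (A * q) (q ^ 2) n"
proof -
  have "qpoch A q (2 * n + 1) = qpoch A q (2 * n) * (1 - A * (q ^ 2) ^ n)"
    by (simp add: qpoch_Suc power_mult)
  also have "\<dots> = qpoch A (q ^ 2) n * qpoch (A * q) (q ^ 2) n * (1 - A * (q ^ 2) ^ n)"
    by (simp only: qpoch_even_odd)
  finally show ?thesis
    by (simp add: qpoch_Suc ac_simps)
qed

lemma h_term_eq:
  "h_term n = inverse (1 - fps_X) *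
     (qpoch (- fps_X) (fps_X ^ 2) n * qpoch (- (fps_X ^ 2)) (fps_X ^ 2) n * fps_X ^ n
      * inverse (qpoch (fps_X ^ 2) (fps_X ^ 2) n * qpoch (fps_X ^ 3) (fps_X ^ 2) n))"
proof -
  have X2: "fps_X * fps_X = (fps_X ^ 2 :: real fps)" and X3: "fps_X * fps_X ^ 2 = (fps_X ^ 3 :: real fps)"
    by (simp_all add: eval_nat_numeral)
  have "qpoch (- fps_X) fps_X (2 * n) = qpoch (- fps_X) (fps_X ^ 2) n * qpoch (- (fps_X ^ 2)) (fps_X ^ 2) n"
    using qpoch_even_odd[of "- fps_X" fps_X n] by (simp add: X2)
  moreover have "qpoch fps_X fps_X (2 * n + 1) = qpoch fps_X (fps_X ^ 2) (1 + n) * qpoch (fps_X ^ 2) (fps_X ^ 2) n"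
    using qpoch_odd[of fps_X fps_X n] by (simp add: X2)
  moreover have "qpoch fps_X (fps_X ^ 2) (1 + n) = (1 - fps_X) * qpoch (fps_X ^ 3) (fps_X ^ 2) n"
    unfolding qpoch_add by (simp add: qpoch_Suc X3)
  ultimately show ?thesis
    by (simp add: h_term_def fps_inverse_mult mult_ac)
qed

definition h_product :: "real fps" where
  "h_product = qpoch_inf (- fps_X) fps_X * inverse (qpoch_inf fps_X fps_X)
     * qpoch_inf (fps_X ^ 4) (fps_X ^ 4) * qpoch_inf (- (fps_X ^ 4)) (fps_X ^ 4)
     * qpoch_inf (- (fps_X ^ 4)) (fps_X ^ 4)"

lemma fps_X_power_dvd_h_term: "fps_X ^ n dvd h_term n"
  by (simp add: h_term_def mult.assoc)

lemma suminf_h_term_eq_phi21: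
  "(\<Sum>n. h_term n) = inverse (1 - fps_X) * phi21 (- fps_X) (- (fps_X ^ 2)) (fps_X ^ 3) (fps_X ^ 2) fps_X"
  unfolding h_term_eq phi21_def
  by (rule suminf_fps_mult_left[symmetric]) (simp add: mult.commute mult.left_commute)

lemma phi21_eq_qpoch_inf_quotient:
  "phi21 (- fps_X) fps_X (- (fps_X ^ 2)) (fps_X ^ 2) (- (fps_X ^ 2))
   = qpoch_inf (- (fps_X ^ 4)) (fps_X ^ 4) * inverse (qpoch_inf (- (fps_X ^ 2)) (fps_X ^ 4))"
proof -
  have X4: "(fps_X ^ 2) ^ 2 = (fps_X ^ 4 :: real fps)" "fps_X ^ 2 * fps_X ^ 2 = (fps_X ^ 4 :: real fps)"
    by (simp_all flip: power_mult power_add)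
  have "qpoch (- fps_X) (fps_X ^ 2) m * qpoch fps_X (fps_X ^ 2) m = qpoch (fps_X ^ 2) (fps_X ^ 4) m"
    "qpoch (fps_X ^ 2) (fps_X ^ 2) m * qpoch (- (fps_X ^ 2)) (fps_X ^ 2) m = qpoch (fps_X ^ 4) (fps_X ^ 4) m"
    for m
    using qpoch_mult_uminus[of fps_X "fps_X ^ 2" m] qpoch_mult_uminus[of "fps_X ^ 2" "fps_X ^ 2" m]
    by (simp_all add: X4 mult.commute)
  then have "phi21 (- fps_X) fps_X (- (fps_X ^ 2)) (fps_X ^ 2) (- (fps_X ^ 2))
      = (\<Sum>m. qbinomial_term (fps_X ^ 2) (fps_X ^ 4) (- (fps_X ^ 2)) m)"
    unfolding phi21_def qbinomial_term_def by (simp add: mult_ac)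
  also have "\<dots> = qpoch_inf (- (fps_X ^ 4)) (fps_X ^ 4) * inverse (qpoch_inf (- (fps_X ^ 2)) (fps_X ^ 4))"
    using q_binomial[of "fps_X ^ 4" "- (fps_X ^ 2)" "fps_X ^ 2"] by (simp add: X4)
  finally show ?thesis .
qed

lemma suminf_h_term: "(\<Sum>n. h_term n) = h_product"
proof -
  have X: "fps_X $ 0 = (0 :: real)" "(fps_X ^ 2) $ 0 = (0 :: real)" "(fps_X ^ 4) $ 0 = (0 :: real)"
    by simp_all
  have X_powers: "fps_X * fps_X = (fps_X ^ 2 :: real fps)" "fps_X * fps_X ^ 2 = (fps_X ^ 3 :: real fps)"
      "fps_X ^ 2 * fps_X = (fps_X ^ 3 :: real fps)"
      "(fps_X ^ 2) ^ 2 = (fps_X ^ 4 :: real fps)" "fps_X ^ 2 * fps_X ^ 2 = (fps_X ^ 4 :: real fps)"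
    by (simp_all add: eval_nat_numeral)
  define P where "P A q = qpoch_inf A q" for A q
  have heine: "phi21 (- fps_X) (- (fps_X ^ 2)) (fps_X ^ 3) (fps_X ^ 2) fps_X
      = P (- (fps_X ^ 2)) (fps_X ^ 2) * P (- (fps_X ^ 2)) (fps_X ^ 2)
        * inverse (P (fps_X ^ 3) (fps_X ^ 2) * P fps_X (fps_X ^ 2))
        * phi21 (- fps_X) fps_X (- (fps_X ^ 2)) (fps_X ^ 2) (- (fps_X ^ 2))"
    using heine_transformation[of "fps_X ^ 2" fps_X "- (fps_X ^ 2)" "- fps_X" "- fps_X"]
    by (simp add: P_def X_powers)
  have odd_shift: "P fps_X (fps_X ^ 2) = (1 - fps_X) * P (fps_X ^ 3) (fps_X ^ 2)"
    using qpoch_inf_eq_1_minus_mult[OF X(2), of fps_X] by (simp add: P_def X_powers)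
  have even_split: "P (- (fps_X ^ 2)) (fps_X ^ 2) = P (- (fps_X ^ 2)) (fps_X ^ 4) * P (- (fps_X ^ 4)) (fps_X ^ 4)"
    using qpoch_inf_even_odd[OF X(2), of "- (fps_X ^ 2)"] by (simp add: P_def X_powers)
  have euler: "P fps_X (fps_X ^ 2) * P (- fps_X) fps_X = 1"
    using qpoch_inf_euler[OF X(1)] by (simp add: P_def)
  have full_split: "P fps_X fps_X = P fps_X (fps_X ^ 2) * P (fps_X ^ 2) (fps_X ^ 2)"
    using qpoch_inf_even_odd[OF X(1), of fps_X] by (simp add: P_def X_powers)
  have square: "P (fps_X ^ 2) (fps_X ^ 2) * P (- (fps_X ^ 2)) (fps_X ^ 2) = P (fps_X ^ 4) (fps_X ^ 4)"
    using qpoch_inf_mult_uminus[OF X(2), of "fps_X ^ 2"] by (simp add: P_def X_powers)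
  have units: "(1 - fps_X) * inverse (1 - fps_X) = (1 :: real fps)"
      "P (fps_X ^ 3) (fps_X ^ 2) * inverse (P (fps_X ^ 3) (fps_X ^ 2)) = 1"
      "P fps_X (fps_X ^ 2) * inverse (P fps_X (fps_X ^ 2)) = 1"
      "P (- (fps_X ^ 2)) (fps_X ^ 4) * inverse (P (- (fps_X ^ 2)) (fps_X ^ 4)) = 1"
      "P (fps_X ^ 2) (fps_X ^ 2) * inverse (P (fps_X ^ 2) (fps_X ^ 2)) = 1"
    by (simp_all add: P_def inverse_mult_eq_1')
  show ?thesis
    unfolding suminf_h_term_eq_phi21 heine phi21_eq_qpoch_inf_quotient h_product_def P_def[symmetric]
      full_split fps_inverse_mult
    using odd_shift even_split euler square units by algebra
qed

section \<open>Counting coloured partitions\<close>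

definition weighted_multisets :: "('a \<Rightarrow> nat) \<Rightarrow> 'a set \<Rightarrow> nat \<Rightarrow> 'a multiset set" where
  "weighted_multisets w T n = {M. set_mset M \<subseteq> T \<and> (\<Sum>x\<in>#M. w x) = n}"

lemma weighted_multisets_empty: "weighted_multisets w {} n = (if n = 0 then {{#}} else {})"
  by (auto simp: weighted_multisets_def)

lemma finite_weighted_multisets:
  assumes "finite T" "\<And>t. t \<in> T \<Longrightarrow> w t > 0"
  shows "finite (weighted_multisets w T n)"
proof (rule finite_subset)
  show "weighted_multisets w T n \<subseteq> (\<Union>s\<le>n. multisets_of_size T s)"
  proof
    fix M assume M: "M \<in> weighted_multisets w T n"
    then have "size M \<le> (\<Sum>x\<in>#M. w x)"
      unfolding size_eq_sum_mset weighted_multisets_def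
      using assms(2) by (intro sum_mset_mono) (auto simp: Suc_le_eq)
    with M show "M \<in> (\<Union>s\<le>n. multisets_of_size T s)"
      by (auto simp: weighted_multisets_def multisets_of_size_def)
  qed
qed (use assms(1) in auto)

lemma weighted_multisets_insert:
  assumes "t \<notin> T"
  shows "weighted_multisets w (insert t T) n = weighted_multisets w T n
           \<union> (if w t \<le> n then add_mset t ` weighted_multisets w (insert t T) (n - w t) else {})"
proof (intro equalityI subsetI)
  fix M assume M: "M \<in> weighted_multisets w (insert t T) n"
  show "M \<in> weighted_multisets w T n
           \<union> (if w t \<le> n then add_mset t ` weighted_multisets w (insert t T) (n - w t) else {})"
  proof (cases "t \<in># M")
    case True
    define M' where "M' = M - {#t#}"
    have M_eq: "M = add_mset t M'"
      using True by (simp add: M'_def)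
    with M have "w t \<le> n" "M' \<in> weighted_multisets w (insert t T) (n - w t)"
      by (auto simp: weighted_multisets_def)
    then show ?thesis
      using M_eq by simp
  qed (use M in \<open>auto simp: weighted_multisets_def\<close>)
qed (auto simp: weighted_multisets_def split: if_splits)

lemma card_weighted_multisets_insert:
  assumes "finite T" "\<And>t'. t' \<in> insert t T \<Longrightarrow> w t' > 0" "t \<notin> T"
  shows "card (weighted_multisets w (insert t T) n) = card (weighted_multisets w T n)
           + (if w t \<le> n then card (weighted_multisets w (insert t T) (n - w t)) else 0)"
proof -
  have "finite (weighted_multisets w T n)" "finite (weighted_multisets w (insert t T) (n - w t))"
    using assms by (auto intro: finite_weighted_multisets)
  moreover have "weighted_multisets w T n \<inter> add_mset t ` weighted_multisets w (insert t T) m = {}" for m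
    using assms(3) by (auto simp: weighted_multisets_def)
  moreover have "card (add_mset t ` weighted_multisets w (insert t T) m)
      = card (weighted_multisets w (insert t T) m)" for m
    by (simp add: card_image inj_on_def)
  ultimately show ?thesis
    using weighted_multisets_insert[OF assms(3), of w n] by (simp add: card_Un_disjoint)
qed

lemma nth_inverse_one_minus_X_power_mult:
  fixes G :: "'a::field fps"
  assumes "k > 0"
  shows "(inverse (1 - fps_X ^ k) * G) $ n
       = G $ n + (if k \<le> n then (inverse (1 - fps_X ^ k) * G) $ (n - k) else 0)"
proof -
  have geometric: "(1 - y) * i = 1 \<Longrightarrow> i * g = g + y * (i * g)" for y i g :: "'a fps"
    by algebra
  have "inverse (1 - fps_X ^ k) * G = G + fps_X ^ k * (inverse (1 - fps_X ^ k) * G)"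
    using assms by (intro geometric inverse_mult_eq_1') simp
  then have "(inverse (1 - fps_X ^ k) * G) $ n = (G + fps_X ^ k * (inverse (1 - fps_X ^ k) * G)) $ n"
    by (rule arg_cong)
  then show ?thesis
    by (simp add: fps_X_power_mult_nth)
qed

lemma nth_prod_inverse_one_minus_X_power:
  assumes "finite T" "\<And>t. t \<in> T \<Longrightarrow> w t > 0"
  shows "(\<Prod>t\<in>T. inverse (1 - fps_X ^ w t)) $ n = real (card (weighted_multisets w T n))"
  using assms
proof (induction T arbitrary: n rule: finite_induct)
  case (insert t T)
  define F where "F = (\<Prod>t\<in>insert t T. inverse (1 - fps_X ^ w t) :: real fps)"
  have F_eq: "F = inverse (1 - fps_X ^ w t) * (\<Prod>t\<in>T. inverse (1 - fps_X ^ w t))"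
    using insert.hyps by (simp add: F_def)
  have "w t > 0"
    using insert.prems by simp
  have nth_T: "(\<Prod>t\<in>T. inverse (1 - fps_X ^ w t)) $ m = real (card (weighted_multisets w T m))" for m
    using insert.prems by (intro insert.IH) simp
  have "F $ n = real (card (weighted_multisets w (insert t T) n))"
  proof (induction n rule: less_induct)
    case (less n)
    have "F $ n = (\<Prod>t\<in>T. inverse (1 - fps_X ^ w t)) $ n + (if w t \<le> n then F $ (n - w t) else 0)"
      unfolding F_eq using \<open>w t > 0\<close> by (rule nth_inverse_one_minus_X_power_mult)
    also have "\<dots> = real (card (weighted_multisets w T n))
        + (if w t \<le> n then real (card (weighted_multisets w (insert t T) (n - w t))) else 0)"
      using \<open>w t > 0\<close> less.IH[of "n - w t"] by (simp add: nth_T)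
    also have "\<dots> = real (card (weighted_multisets w (insert t T) n))"
      using card_weighted_multisets_insert[OF insert.hyps(1) insert.prems insert.hyps(2), where n = n]
      by simp
    finally show ?case .
  qed
  then show ?case
    by (simp add: F_def)
qed (simp add: weighted_multisets_empty)

definition coloured_parts :: "nat \<Rightarrow> (nat \<times> nat) set" where
  "coloured_parts N = (SIGMA p:{1..N}. {..<colours p})"

lemma weighted_multisets_coloured_parts:
  assumes "n \<le> N"
  shows "weighted_multisets fst (coloured_parts N) n = coloured_partitions n"
proof (intro equalityI subsetI)
  fix M assume M: "M \<in> coloured_partitions n"
  have "fst x \<le> n" if "x \<in># M" for x
    using M that by (auto simp: coloured_partitions_def dest!: multi_member_split)
  then show "M \<in> weighted_multisets fst (coloured_parts N) n"
    using M assms by (force simp: weighted_multisets_def coloured_partitions_def coloured_parts_def)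
qed (auto simp: weighted_multisets_def coloured_partitions_def coloured_parts_def)

lemma prod_coloured_parts:
  "(\<Prod>x\<in>coloured_parts N. inverse (1 - fps_X ^ fst x))
   = inverse (\<Prod>p=1..N. (1 - fps_X ^ p) ^ colours p :: real fps)"
proof -
  have "(\<Prod>x\<in>coloured_parts N. inverse (1 - fps_X ^ fst x))
      = (\<Prod>p=1..N. \<Prod>c<colours p. inverse (1 - fps_X ^ p) :: real fps)"
    unfolding coloured_parts_def by (subst prod.Sigma) (simp_all add: split_beta)
  then show ?thesis
    by (simp add: inverse_prod_fps fps_inverse_power)
qed

lemma residue_class_eq_image:
  fixes a b K :: nat
  assumes "1 \<le> a" "a \<le> b"
  shows "{p \<in> {1..b * K}. p mod b = a mod b} = (\<lambda>j. a + b * j) ` {..<K}"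
proof (intro equalityI subsetI)
  fix p assume "p \<in> {p \<in> {1..b * K}. p mod b = a mod b}"
  then have p: "1 \<le> p" "p \<le> b * K" "p mod b = a mod b"
    by auto
  have "a \<le> p"
  proof (cases "a = b")
    case True
    then have "b dvd p"
      using p(3) by (simp add: mod_0_imp_dvd)
    then show ?thesis
      using True p(1) by (simp add: dvd_imp_le)
  next
    case False
    then have "a = p mod b"
      using assms(2) p(3) by simp
    then show ?thesis
      by simp
  qed
  moreover have "b dvd p - a"
    using p(3) \<open>a \<le> p\<close> by (simp add: mod_eq_dvd_iff_nat)
  ultimately obtain j where j: "p = a + b * j"
    by (metis dvdE le_add_diff_inverse)
  then have "b * j < b * K"
    using p(2) assms(1) by linarith
  then have "j < K"
    by simp
  with j show "p \<in> (\<lambda>j. a + b * j) ` {..<K}"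
    by blast
next
  fix p assume "p \<in> (\<lambda>j. a + b * j) ` {..<K}"
  then obtain j where j: "j < K" "p = a + b * j"
    by blast
  have "a + b * j \<le> b * Suc j"
    using assms by simp
  also have "\<dots> \<le> b * K"
    using j(1) by (intro mult_le_mono2) simp
  finally show "p \<in> {p \<in> {1..b * K}. p mod b = a mod b}"
    using j assms by auto
qed

lemma prod_residue_class_eq_qpoch:
  fixes a b K :: nat
  assumes "1 \<le> a" "a \<le> b"
  shows "(\<Prod>p=1..b * K. (1 - fps_X ^ p) ^ of_bool (p mod b = a mod b)) = qpoch (fps_X ^ a) (fps_X ^ b) K"
proof -
  have "(\<Prod>p=1..b * K. (1 - fps_X ^ p) ^ of_bool (p mod b = a mod b))
      = (\<Prod>p \<in> {p \<in> {1..b * K}. p mod b = a mod b}. 1 - fps_X ^ p :: real fps)"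
    by (subst prod.inter_filter) (auto intro: prod.cong)
  also have "\<dots> = (\<Prod>j<K. 1 - fps_X ^ (a + b * j))"
    unfolding residue_class_eq_image[OF assms] using assms
    by (subst prod.reindex) (simp_all add: inj_on_def)
  also have "\<dots> = qpoch (fps_X ^ a) (fps_X ^ b) K"
    by (simp add: qpoch_def power_add power_mult)
  finally show ?thesis .
qed

text \<open>Each indicator is written as \<open>p mod b = a mod b\<close>, the form of \<open>prod_residue_class_eq_qpoch\<close>.\<close>

lemma colours_plus_multiple_of_8:
  "colours p + of_bool (p mod 8 = 8 mod 8)
   = of_bool (p mod 1 = 1 mod 1) + of_bool (p mod 2 = 1 mod 2) + of_bool (p mod 8 = 4 mod 8)"
proof -
  have "p mod 2 = p mod 8 mod 2"
    by (simp add: mod_mod_cancel)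
  moreover have "p mod 8 \<in> {0, 1, 2, 3, 4, 5, 6, 7}"
    by auto
  ultimately show ?thesis
    unfolding colours_def by auto
qed

lemma prod_colours_mult_qpoch:
  "(\<Prod>p=1..8 * K. (1 - fps_X ^ p) ^ colours p) * qpoch (fps_X ^ 8) (fps_X ^ 8) K
   = qpoch fps_X fps_X (8 * K) * qpoch fps_X (fps_X ^ 2) (4 * K) * qpoch (fps_X ^ 4) (fps_X ^ 8) K"
proof -
  define E :: "(nat \<Rightarrow> nat) \<Rightarrow> real fps" where "E e = (\<Prod>p=1..8 * K. (1 - fps_X ^ p) ^ e p)" for e
  have E_add: "E (\<lambda>p. e p + e' p) = E e * E e'" for e e'
    by (simp add: E_def power_add prod.distrib)
  have "E (\<lambda>p. of_bool (p mod 8 = 8 mod 8)) = qpoch (fps_X ^ 8) (fps_X ^ 8) K"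
    "E (\<lambda>p. of_bool (p mod 8 = 4 mod 8)) = qpoch (fps_X ^ 4) (fps_X ^ 8) K"
    unfolding E_def by (rule prod_residue_class_eq_qpoch; simp)+
  moreover have "E (\<lambda>p. of_bool (p mod 2 = 1 mod 2)) = qpoch fps_X (fps_X ^ 2) (4 * K)"
    using prod_residue_class_eq_qpoch[of 1 2 "4 * K"] by (simp add: E_def)
  moreover have "E (\<lambda>p. of_bool (p mod 1 = 1 mod 1)) = qpoch fps_X fps_X (8 * K)"
    using prod_residue_class_eq_qpoch[of 1 1 "8 * K"] by (simp add: E_def)
  moreover have "E colours * E (\<lambda>p. of_bool (p mod 8 = 8 mod 8))
      = E (\<lambda>p. of_bool (p mod 1 = 1 mod 1)) * E (\<lambda>p. of_bool (p mod 2 = 1 mod 2))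
        * E (\<lambda>p. of_bool (p mod 8 = 4 mod 8))"
    unfolding E_add[symmetric] colours_plus_multiple_of_8 ..
  ultimately show ?thesis
    by (simp add: E_def)
qed

lemma h_product_mult:
  "h_product * (qpoch_inf fps_X fps_X * qpoch_inf fps_X (fps_X ^ 2) * qpoch_inf (fps_X ^ 4) (fps_X ^ 8))
   = qpoch_inf (fps_X ^ 8) (fps_X ^ 8)"
proof -
  have X: "fps_X $ 0 = (0 :: real)" "(fps_X ^ 4) $ 0 = (0 :: real)"
    by simp_all
  have X_powers: "(fps_X ^ 4) ^ 2 = (fps_X ^ 8 :: real fps)"
    by (simp flip: power_mult)
  have "qpoch_inf fps_X (fps_X ^ 2) * qpoch_inf (- fps_X) fps_X = 1"
    by (rule qpoch_inf_euler[OF X(1)])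
  moreover have "qpoch_inf (fps_X ^ 4) (fps_X ^ 8) * qpoch_inf (- (fps_X ^ 4)) (fps_X ^ 4) = 1"
    using qpoch_inf_euler[OF X(2)] by (simp add: X_powers)
  moreover have "qpoch_inf (fps_X ^ 4) (fps_X ^ 4) * qpoch_inf (- (fps_X ^ 4)) (fps_X ^ 4)
      = qpoch_inf (fps_X ^ 8) (fps_X ^ 8)"
    using qpoch_inf_mult_uminus[OF X(2), of "fps_X ^ 4"] by (simp add: X_powers)
  moreover have "qpoch_inf fps_X fps_X * inverse (qpoch_inf fps_X fps_X) = 1"
    by (simp add: inverse_mult_eq_1')
  ultimately show ?thesis
    unfolding h_product_def by algebra
qed

lemma fps_cong_h_product:
  "fps_cong K h_product (inverse (\<Prod>p=1..8 * K. (1 - fps_X ^ p) ^ colours p))"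
proof -
  define D where "D = qpoch_inf fps_X fps_X * qpoch_inf fps_X (fps_X ^ 2) * qpoch_inf (fps_X ^ 4) (fps_X ^ 8)"
  define D\<^sub>K where "D\<^sub>K = qpoch fps_X fps_X (8 * K) * qpoch fps_X (fps_X ^ 2) (4 * K) * qpoch (fps_X ^ 4) (fps_X ^ 8) K"
  have units: "D $ 0 \<noteq> 0" "D\<^sub>K $ 0 \<noteq> 0"
    by (simp_all add: D_def D\<^sub>K_def)
  have "D * inverse D = 1"
    using units(1) by (rule inverse_mult_eq_1')
  then have "h_product = qpoch_inf (fps_X ^ 8) (fps_X ^ 8) * inverse D"
    using h_product_mult unfolding D_def[symmetric] by algebra
  also have "fps_cong K \<dots> (qpoch (fps_X ^ 8) (fps_X ^ 8) K * inverse D\<^sub>K)"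
    unfolding D_def D\<^sub>K_def
    by (intro fps_cong_mult fps_cong_inverse fps_cong_qpoch_inf) simp_all
  also have "qpoch (fps_X ^ 8) (fps_X ^ 8) K * inverse D\<^sub>K = inverse (\<Prod>p=1..8 * K. (1 - fps_X ^ p) ^ colours p)"
  proof -
    have "(\<Prod>p=1..8 * K. (1 - fps_X ^ p) ^ colours p) * qpoch (fps_X ^ 8) (fps_X ^ 8) K * inverse D\<^sub>K = 1"
      using prod_colours_mult_qpoch units(2) by (simp add: D\<^sub>K_def inverse_mult_eq_1')
    then show ?thesis
      by (simp add: fps_inverse_unique mult.assoc)
  qed
  finally show ?thesis .
qed

theorem theorem3:
  fixes n :: nat
  shows "((\<lambda>N. \<Sum>k<N. h_term k) \<longlonglongrightarrow>
           qpoch_inf (- fps_X) fps_X * inverse (qpoch_inf fps_X fps_X)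
           * qpoch_inf (fps_X ^ 4) (fps_X ^ 4) * qpoch_inf (- (fps_X ^ 4)) (fps_X ^ 4)
           * qpoch_inf (- (fps_X ^ 4)) (fps_X ^ 4))
         \<and> h n = real (card (coloured_partitions n))"
proof -
  have lim: "(\<lambda>N. \<Sum>k<N. h_term k) \<longlonglongrightarrow> h_product"
    using sums_fps_if_X_power_dvd[OF fps_X_power_dvd_h_term] by (simp add: sums_def suminf_h_term)
  define N where "N = 8 * Suc n"
  have "h n = h_product $ n"
    using lim by (simp add: h_def h_gf_def limI)
  also have "\<dots> = inverse (\<Prod>p=1..N. (1 - fps_X ^ p) ^ colours p) $ n"
    using fps_cong_h_product[of "Suc n"] by (simp add: N_def fps_cong_iff_nth)
  also have "\<dots> = real (card (weighted_multisets fst (coloured_parts N) n))"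
    unfolding prod_coloured_parts[symmetric]
    by (rule nth_prod_inverse_one_minus_X_power) (auto simp: coloured_parts_def)
  also have "weighted_multisets fst (coloured_parts N) n = coloured_partitions n"
    by (rule weighted_multisets_coloured_parts) (simp add: N_def)
  finally show ?thesis
    using lim unfolding h_product_def by blast
qed

end
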